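(* Let $(\varepsilon_i)_{i\ge4}$ and $(\varepsilon'_i)_{i\ge l}$ be elements of $\mathcal{D}^\infty$ such that $\sum_{i=4}^\infty\varepsilon_i\alpha^i=\sum_{i=l}^\infty\varepsilon'_i\alpha^i$, where $l<4$ and $\varepsilon'_l=1$. Then $\varepsilon'_l\alpha^l+\varepsilon'_{l+1}\alpha^{l+1}+\cdots+\varepsilon'_3\alpha^3$ belongs to $S$. In particular $l\ge-3$, and $\varepsilon'_l\alpha^l+\cdots+\varepsilon'_3\alpha^3=\alpha^{-3}+\alpha^{-2}+1+\alpha^3$ if $l=-3$; $\varepsilon'_l\alpha^l+\cdots+\varepsilon'_3\alpha^3=\alpha^{-2}+\alpha^{-1}+\alpha$ if $l=-2$; $\varepsilon'_l\alpha^l+\cdots+\varepsilon'_3\alpha^3=\alpha^{-1}+1+\alpha^2$ if $l=-1$.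
   Context: Let $P(x)=x^4-x^3-x^2-x-1$. Its roots are $\beta=\beta_1\approx 1.9275$, a real root $\beta_2\approx-0.7748$, and a pair of complex conjugate roots $\beta_3\approx-0.0763+0.8147i$ and $\overline{\beta_3}$. For $i\in\mathbb{Z}$ put $\alpha^i=(\beta_2^i,\beta_3^i)\in\mathbb{R}\times\mathbb{C}$, with $\alpha^0=1=(1,1)$; arithmetic is componentwise and an integer $n$ is identified with $(n,n)$. $\mathcal{D}^\infty$ is the set of sequences $(\varepsilon_i)_{i\ge l}$, $l\in\mathbb{Z}$, with $\varepsilon_i\in\{0,1\}$ and containing no four consecutive $1$'s. $S$ is the set $\{\pm\sum_{i=0}^3c_i\alpha^i : c_i\in\{0,1\},\ c_0c_1c_2c_3\neq1111\}\cup\{\pm(\alpha^{-1}+1+\alpha^2),\pm(\alpha^{-2}+\alpha^{-1}+\alpha),\pm(\alpha^{-3}+\alpha^{-2}+1+\alpha^3)\}$. *)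

theory Defs
  imports Complex_Main
begin

definition beta2 :: real where
  "beta2 = (THE x::real. x^4 - x^3 - x^2 - x - 1 = 0 \<and> x < 0)"

definition beta3 :: complex where
  "beta3 = (THE z::complex. z^4 - z^3 - z^2 - z - 1 = 0 \<and> Im z > 0)"

text \<open>alpha^i = (beta2^i, beta3^i) in R x C; elements of R x C are represented as pairs.\<close>
definition alpha_pow :: "int \<Rightarrow> real \<times> complex" where
  "alpha_pow i = (beta2 powi i, beta3 powi i)"

definition Dinf :: "int \<Rightarrow> (int \<Rightarrow> int) \<Rightarrow> bool" where
  "Dinf l eps \<longleftrightarrow> (\<forall>i\<ge>l. eps i \<in> {0,1}) \<and>
     (\<forall>i\<ge>l. \<not> (eps i = 1 \<and> eps (i+1) = 1 \<and> eps (i+2) = 1 \<and> eps (i+3) = 1))"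

definition series_val :: "int \<Rightarrow> (int \<Rightarrow> int) \<Rightarrow> real \<times> complex" where
  "series_val l eps =
     ((\<Sum>n. of_int (eps (l + int n)) * beta2 powi (l + int n)),
      (\<Sum>n. of_int (eps (l + int n)) * beta3 powi (l + int n)))"

definition partial_val :: "int \<Rightarrow> int \<Rightarrow> (int \<Rightarrow> int) \<Rightarrow> real \<times> complex" where
  "partial_val a b eps =
     ((\<Sum>i=a..b. of_int (eps i) * beta2 powi i),
      (\<Sum>i=a..b. of_int (eps i) * beta3 powi i))"

definition aset :: "int set \<Rightarrow> real \<times> complex" where
  "aset A = ((\<Sum>i\<in>A. beta2 powi i), (\<Sum>i\<in>A. beta3 powi i))"

definition pneg :: "real \<times> complex \<Rightarrow> real \<times> complex" where
  "pneg p = (- fst p, - snd p)"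

definition S_set :: "(real \<times> complex) set" where
  "S_set = (let T = {aset A | A. A \<subseteq> {0..3} \<and> A \<noteq> {0..3}}
                    \<union> {aset {-1,0,2}, aset {-2,-1,1}, aset {-3,-2,0,3}}
            in T \<union> pneg ` T)"

end

theory Submission
  imports Defs
begin

text \<open>
  Subtracting the two expansions and dividing by \<open>\<alpha>\<^sup>l\<close> gives digits \<open>c j \<in> {-1,0,1}\<close>
  with \<open>c 0 = 1\<close> and \<open>c j = \<epsilon>'(l + j)\<close> for \<open>l + j \<le> 3\<close>, whose power series vanishes at both
  roots \<open>\<beta>\<^sub>2, \<beta>\<^sub>3\<close> of modulus less than 1. Reduced modulo the minimal polynomial, the
  partial sums are \<open>x (c 0 + \<dots> + c (n-1) x\<^sup>n\<^sup>-\<^sup>1) = x\<^sup>n v\<^sub>n(x)\<close> with an integer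
  polynomial \<open>v\<^sub>n\<close> of degree below 4, the carry state. Carry states are bounded at all four
  conjugates: at \<open>\<beta>\<close> by a geometric series, at \<open>\<beta>\<^sub>2, \<beta>\<^sub>3\<close> because the partial sums are
  minus the tails. So they stay in a finite box of \<open>\<int>\<^sup>4\<close>, and a certificate of heights on that
  box shows that all states of an infinite path have height 0. An exhaustive search over digit words
  through height-0 states without four consecutive ones leaves only the three exceptional prefixes for
  \<open>l \<in> {-3,-2,-1}\<close> and none for \<open>l \<le> -4\<close>; for \<open>l \<ge> 0\<close> membership in \<open>S\<close> is just the
  condition on four consecutive ones.
\<close>

section \<open>The conjugates of \<open>\<beta>\<close>\<close>

lemma quartic_factor_through_roots:
  fixes r s x :: "'a::field"
  assumes r: "r^4 - r^3 - r^2 - r - 1 = 0" and s: "s^4 - s^3 - s^2 - s - 1 = 0" and "r \<noteq> s"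
  shows "x^4 - x^3 - x^2 - x - 1
    = (x - r) * (x - s) * (x^2 + (r + s - 1) * x + (r^2 - r - 1 + (r - 1) * s + s^2))"
proof -
  define Q where "Q y = y^3 + (r - 1) * y^2 + (r^2 - r - 1) * y + (r^3 - r^2 - r - 1)" for y
  have div_r: "y^4 - y^3 - y^2 - y - 1 = (y - r) * Q y + (r^4 - r^3 - r^2 - r - 1)" for y
    unfolding Q_def by algebra
  have "(s - r) * Q s = 0" using div_r[of s] r s by simp
  hence Qs: "Q s = 0" using \<open>r \<noteq> s\<close> by simp
  have div_s: "Q y = (y - s) * (y^2 + (r + s - 1) * y + (r^2 - r - 1 + (r - 1) * s + s^2)) + Q s" for y
    unfolding Q_def by algebra
  show ?thesis using div_r[of x] div_s[of x] Qs r by simp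
qed

lemma quartic_strict_antimono_nonpos:
  fixes x y :: real
  assumes "x < y" "y \<le> 0"
  shows "y^4 - y^3 - y^2 - y - 1 < x^4 - x^3 - x^2 - x - 1"
proof -
  have "(x + y) * (x^2 + y^2) \<le> 0" using assms by (intro mult_nonpos_nonneg) auto
  moreover have "0 \<le> (x - y)^2" "0 \<le> (3 * (x + y) + 2)^2" by simp_all
  ultimately have neg: "(x + y) * (x^2 + y^2) - (x^2 + x*y + y^2) - (x + y) - 1 < 0"
    by (simp add: power2_eq_square algebra_simps)
  have "x^4 - x^3 - x^2 - x - 1 - (y^4 - y^3 - y^2 - y - 1)
      = (x - y) * ((x + y) * (x^2 + y^2) - (x^2 + x*y + y^2) - (x + y) - 1)"
    by (simp add: power2_eq_square power3_eq_cube power4_eq_xxxx algebra_simps)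
  also have "\<dots> > 0" using assms neg by (intro mult_neg_neg) auto
  finally show ?thesis by simp
qed

definition beta1 :: real where
  "beta1 = (SOME x. 1927561/10^6 \<le> x \<and> x \<le> 1927562/10^6 \<and> x^4 - x^3 - x^2 - x - 1 = 0)"

lemma beta1_bounds: "1927561/10^6 \<le> beta1" "beta1 \<le> 1927562/10^6"
  and beta1_root: "beta1^4 - beta1^3 - beta1^2 - beta1 - 1 = 0"
proof -
  have "\<exists>x::real. 1927561/10^6 \<le> x \<and> x \<le> 1927562/10^6 \<and> x^4 - x^3 - x^2 - x - 1 = 0"
    by (rule IVT'[of "\<lambda>x. x^4 - x^3 - x^2 - x - 1"])
      (auto intro!: continuous_intros simp: power_divide)
  from someI_ex[OF this] show "1927561/10^6 \<le> beta1" "beta1 \<le> 1927562/10^6"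
    "beta1^4 - beta1^3 - beta1^2 - beta1 - 1 = 0"
    unfolding beta1_def by auto
qed

lemma beta2_bounds: "-774805/10^6 \<le> beta2" "beta2 \<le> -774804/10^6"
  and beta2_root: "beta2^4 - beta2^3 - beta2^2 - beta2 - 1 = 0"
proof -
  have "\<exists>y::real. -774805/10^6 \<le> y \<and> y \<le> -774804/10^6 \<and> y^4 - y^3 - y^2 - y - 1 = 0"
    by (rule IVT2'[of "\<lambda>x. x^4 - x^3 - x^2 - x - 1"])
      (auto intro!: continuous_intros simp: power_divide)
  then obtain y :: real
    where y: "-774805/10^6 \<le> y" "y \<le> -774804/10^6" "y^4 - y^3 - y^2 - y - 1 = 0"
    by blast
  have "beta2 = y"
    unfolding beta2_def
  proof (rule the_equality)
    fix x :: real assume x: "x^4 - x^3 - x^2 - x - 1 = 0 \<and> x < 0"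
    show "x = y"
      using quartic_strict_antimono_nonpos[of x y] quartic_strict_antimono_nonpos[of y x] x y
      by (cases x y rule: linorder_cases) auto
  qed (use y in auto)
  with y show "-774805/10^6 \<le> beta2" "beta2 \<le> -774804/10^6"
    "beta2^4 - beta2^3 - beta2^2 - beta2 - 1 = 0" by simp_all
qed

lemma mult_interval_bounds:
  fixes x y :: real
  assumes "0 \<le> a" "a \<le> x" "x \<le> b" "0 \<le> c" "c \<le> y" "y \<le> d"
  shows "a * c \<le> x * y \<and> x * y \<le> b * d"
  using assms by (auto intro!: mult_mono)

definition quad_u :: real where "quad_u = (beta1 + beta2 - 1) / 2"
definition quad_q :: real where "quad_q = beta1^2 - beta1 - 1 + (beta1 - 1) * beta2 + beta2^2"
definition quad_w :: real where "quad_w = sqrt (quad_q - quad_u^2)"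

lemma quartic_factor_complex:
  "(z::complex)^4 - z^3 - z^2 - z - 1
    = (z - of_real beta1) * (z - of_real beta2) * (z^2 + 2 * of_real quad_u * z + of_real quad_q)"
proof -
  have "(of_real beta1 :: complex) \<noteq> of_real beta2" using beta1_bounds(1) beta2_bounds(2) by simp
  moreover have "(of_real beta1 :: complex)^4 - (of_real beta1)^3 - (of_real beta1)^2 - of_real beta1 - 1 = 0"
    using arg_cong[OF beta1_root, of "of_real :: real \<Rightarrow> complex"] by simp
  moreover have "(of_real beta2 :: complex)^4 - (of_real beta2)^3 - (of_real beta2)^2 - of_real beta2 - 1 = 0"
    using arg_cong[OF beta2_root, of "of_real :: real \<Rightarrow> complex"] by simp
  ultimately show ?thesis
    using quartic_factor_through_roots[of "of_real beta1" "of_real beta2" z]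
    unfolding quad_u_def quad_q_def by simp
qed

lemma quad_u_bounds: "76375/10^6 \<le> quad_u" "quad_u \<le> 76382/10^6"
  using beta1_bounds beta2_bounds unfolding quad_u_def by simp_all

lemma quad_q_bounds: "66955/10^5 \<le> quad_q" "quad_q \<le> 66960/10^5"
proof -
  define m where "m = - beta2"
  have m: "774804/10^6 \<le> m" "m \<le> 774805/10^6" using beta2_bounds unfolding m_def by simp_all
  have q: "quad_q = beta1 * beta1 - beta1 - 1 - beta1 * m + m + m * m"
    unfolding quad_q_def m_def by (simp add: algebra_simps power2_eq_square)
  have "1927561/10^6 * (1927561/10^6) \<le> beta1 * beta1 \<and> beta1 * beta1 \<le> 1927562/10^6 * (1927562/10^6)"
    by (rule mult_interval_bounds) (use beta1_bounds in simp_all)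
  moreover have "1927561/10^6 * (774804/10^6) \<le> beta1 * m \<and> beta1 * m \<le> 1927562/10^6 * (774805/10^6)"
    by (rule mult_interval_bounds) (use beta1_bounds m in simp_all)
  moreover have "774804/10^6 * (774804/10^6) \<le> m * m \<and> m * m \<le> 774805/10^6 * (774805/10^6)"
    by (rule mult_interval_bounds) (use m in simp_all)
  ultimately show "66955/10^5 \<le> quad_q" "quad_q \<le> 66960/10^5"
    using beta1_bounds m unfolding q by simp_all
qed

lemma quad_w_bounds: "81466/10^5 \<le> quad_w" "quad_w \<le> 81475/10^5"
  and quad_w_square: "quad_w^2 = quad_q - quad_u^2"
proof -
  have "76375/10^6 * (76375/10^6) \<le> quad_u * quad_u \<and> quad_u * quad_u \<le> 76382/10^6 * (76382/10^6)"
    by (rule mult_interval_bounds) (use quad_u_bounds in simp_all)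
  hence d: "(81466/10^5)^2 \<le> quad_q - quad_u^2" "quad_q - quad_u^2 \<le> (81475/10^5)^2"
    using quad_q_bounds by (simp_all add: power2_eq_square)
  show "81466/10^5 \<le> quad_w" unfolding quad_w_def by (rule real_le_rsqrt) (use d in simp)
  show "quad_w \<le> 81475/10^5" unfolding quad_w_def by (rule real_le_lsqrt) (use d in simp_all)
  show "quad_w^2 = quad_q - quad_u^2" unfolding quad_w_def using d(1) by (simp add: power2_eq_square)
qed

lemma quadratic_factor_roots:
  "(z::complex)^2 + 2 * of_real quad_u * z + of_real quad_q
    = (z - Complex (- quad_u) quad_w) * (z - Complex (- quad_u) (- quad_w))"
proof -
  have "of_real quad_q = (of_real (quad_u^2 + quad_w^2) :: complex)" using quad_w_square by simp
  thus ?thesis by (simp add: complex_eq_iff power2_eq_square algebra_simps)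
qed

lemma beta3_eq: "beta3 = Complex (- quad_u) quad_w"
  unfolding beta3_def
proof (rule the_equality)
  show "(Complex (- quad_u) quad_w)^4 - (Complex (- quad_u) quad_w)^3 - (Complex (- quad_u) quad_w)^2
      - Complex (- quad_u) quad_w - 1 = 0 \<and> 0 < Im (Complex (- quad_u) quad_w)"
    using quad_w_bounds(1) by (simp add: quartic_factor_complex quadratic_factor_roots)
next
  fix z :: complex assume z: "z^4 - z^3 - z^2 - z - 1 = 0 \<and> 0 < Im z"
  hence "z \<noteq> of_real beta1" "z \<noteq> of_real beta2" "z \<noteq> Complex (- quad_u) (- quad_w)"
    using quad_w_bounds(1) by (auto simp: complex_eq_iff)
  with z show "z = Complex (- quad_u) quad_w"
    by (simp add: quartic_factor_complex quadratic_factor_roots)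
qed

lemma beta3_root: "beta3^4 - beta3^3 - beta3^2 - beta3 - 1 = 0"
  by (simp add: beta3_eq quartic_factor_complex quadratic_factor_roots)

lemma beta3_nonzero: "beta3 \<noteq> 0"
  using quad_w_bounds(1) by (auto simp: beta3_eq complex_eq_iff)

lemma norm_beta3_le: "norm beta3 \<le> 82/100"
proof -
  have "norm beta3 = sqrt quad_q" using quad_w_square by (simp add: beta3_eq norm_complex_def)
  also have "\<dots> \<le> 82/100" by (rule real_le_lsqrt) (use quad_q_bounds in \<open>simp_all add: power_divide\<close>)
  finally show ?thesis .
qed

lemma beta1_powers_approx:
  "\<bar>beta1 * 10000 - 19276\<bar> \<le> 2" "\<bar>beta1^2 * 10000 - 37155\<bar> \<le> 2" "\<bar>beta1^3 * 10000 - 71618\<bar> \<le> 2"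
proof -
  have sq: "1927561/10^6 * (1927561/10^6) \<le> beta1 * beta1 \<and> beta1 * beta1 \<le> 1927562/10^6 * (1927562/10^6)"
    by (rule mult_interval_bounds) (use beta1_bounds in simp_all)
  have "1927561/10^6 * (1927561/10^6) * (1927561/10^6) \<le> beta1 * beta1 * beta1
      \<and> beta1 * beta1 * beta1 \<le> 1927562/10^6 * (1927562/10^6) * (1927562/10^6)"
    by (rule mult_interval_bounds) (use beta1_bounds sq in simp_all)
  with sq beta1_bounds show "\<bar>beta1 * 10000 - 19276\<bar> \<le> 2" "\<bar>beta1^2 * 10000 - 37155\<bar> \<le> 2"
    "\<bar>beta1^3 * 10000 - 71618\<bar> \<le> 2"
    by (simp_all add: power2_eq_square power3_eq_cube)
qed

lemma beta2_powers_approx: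
  "\<bar>beta2 * 10000 + 7748\<bar> \<le> 2" "\<bar>beta2^2 * 10000 - 6003\<bar> \<le> 2" "\<bar>beta2^3 * 10000 + 4651\<bar> \<le> 2"
proof -
  define m where "m = - beta2"
  have m: "774804/10^6 \<le> m" "m \<le> 774805/10^6" using beta2_bounds unfolding m_def by simp_all
  have sq: "774804/10^6 * (774804/10^6) \<le> m * m \<and> m * m \<le> 774805/10^6 * (774805/10^6)"
    by (rule mult_interval_bounds) (use m in simp_all)
  have cube: "774804/10^6 * (774804/10^6) * (774804/10^6) \<le> m * m * m
      \<and> m * m * m \<le> 774805/10^6 * (774805/10^6) * (774805/10^6)"
    by (rule mult_interval_bounds) (use m sq in simp_all)
  have beta2_m: "beta2 = - m" unfolding m_def by simp
  show "\<bar>beta2 * 10000 + 7748\<bar> \<le> 2" "\<bar>beta2^2 * 10000 - 6003\<bar> \<le> 2"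
    "\<bar>beta2^3 * 10000 + 4651\<bar> \<le> 2"
    using m sq cube unfolding beta2_m by (simp_all add: power2_eq_square power3_eq_cube)
qed

lemma beta3_powers_components:
  "Re beta3 = - quad_u" "Im beta3 = quad_w"
  "Re (beta3^2) = 2 * quad_u * quad_u - quad_q" "Im (beta3^2) = - 2 * quad_u * quad_w"
  "Re (beta3^3) = - 4 * quad_u * quad_u * quad_u + 3 * quad_u * quad_q"
  "Im (beta3^3) = quad_w * (4 * quad_u * quad_u - quad_q)"
proof -
  have q: "quad_q = quad_u * quad_u + quad_w * quad_w" using quad_w_square by (simp add: power2_eq_square)
  show "Re beta3 = - quad_u" "Im beta3 = quad_w"
    "Re (beta3^2) = 2 * quad_u * quad_u - quad_q" "Im (beta3^2) = - 2 * quad_u * quad_w"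
    "Re (beta3^3) = - 4 * quad_u * quad_u * quad_u + 3 * quad_u * quad_q"
    "Im (beta3^3) = quad_w * (4 * quad_u * quad_u - quad_q)"
    by (simp_all add: q beta3_eq power2_eq_square power3_eq_cube algebra_simps)
qed

lemma beta3_powers_approx:
  "\<bar>Re beta3 * 10000 + 764\<bar> \<le> 2" "\<bar>Re (beta3^2) * 10000 + 6579\<bar> \<le> 2"
  "\<bar>Re (beta3^3) * 10000 - 1516\<bar> \<le> 2"
  "\<bar>Im beta3 * 10000 - 8147\<bar> \<le> 2" "\<bar>Im (beta3^2) * 10000 + 1245\<bar> \<le> 2"
  "\<bar>Im (beta3^3) * 10000 + 5265\<bar> \<le> 2"
proof -
  note u = quad_u_bounds and q = quad_q_bounds and w = quad_w_bounds
  have u2: "76375/10^6 * (76375/10^6) \<le> quad_u * quad_u \<and> quad_u * quad_u \<le> 76382/10^6 * (76382/10^6)"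
    by (rule mult_interval_bounds) (use u in simp_all)
  have u3: "76375/10^6 * (76375/10^6) * (76375/10^6) \<le> quad_u * quad_u * quad_u
      \<and> quad_u * quad_u * quad_u \<le> 76382/10^6 * (76382/10^6) * (76382/10^6)"
    by (rule mult_interval_bounds) (use u u2 in simp_all)
  have uq: "76375/10^6 * (66955/10^5) \<le> quad_u * quad_q \<and> quad_u * quad_q \<le> 76382/10^6 * (66960/10^5)"
    by (rule mult_interval_bounds) (use u q in simp_all)
  have uw: "76375/10^6 * (81466/10^5) \<le> quad_u * quad_w \<and> quad_u * quad_w \<le> 76382/10^6 * (81475/10^5)"
    by (rule mult_interval_bounds) (use u w in simp_all)
  have wu2: "81466/10^5 * (76375/10^6 * (76375/10^6)) \<le> quad_w * (quad_u * quad_u)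
      \<and> quad_w * (quad_u * quad_u) \<le> 81475/10^5 * (76382/10^6 * (76382/10^6))"
    by (rule mult_interval_bounds) (use w u2 in simp_all)
  have wq: "81466/10^5 * (66955/10^5) \<le> quad_w * quad_q \<and> quad_w * quad_q \<le> 81475/10^5 * (66960/10^5)"
    by (rule mult_interval_bounds) (use w q in simp_all)
  have im3: "quad_w * (4 * quad_u * quad_u - quad_q) = 4 * (quad_w * (quad_u * quad_u)) - quad_w * quad_q"
    by (simp add: algebra_simps)
  show "\<bar>Re beta3 * 10000 + 764\<bar> \<le> 2" "\<bar>Re (beta3^2) * 10000 + 6579\<bar> \<le> 2"
    "\<bar>Re (beta3^3) * 10000 - 1516\<bar> \<le> 2"
    "\<bar>Im beta3 * 10000 - 8147\<bar> \<le> 2" "\<bar>Im (beta3^2) * 10000 + 1245\<bar> \<le> 2"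
    "\<bar>Im (beta3^3) * 10000 + 5265\<bar> \<le> 2"
    using u q w u2 u3 uq uw wu2 wq unfolding beta3_powers_components im3 by (simp_all add: abs_le_iff)
qed

section \<open>Carry states of digit sequences\<close>

type_synonym state = "int \<times> int \<times> int \<times> int"

fun state_val :: "state \<Rightarrow> 'a::comm_ring_1 \<Rightarrow> 'a" where
  "state_val (a, b, c, e) x = of_int a + of_int b * x + of_int c * x^2 + of_int e * x^3"

text \<open>Division by \<open>x\<close> in \<open>\<int>[x]/(x\<^sup>4 - x\<^sup>3 - x\<^sup>2 - x - 1)\<close>, where
  \<open>x\<^sup>-\<^sup>1 = x\<^sup>3 - x\<^sup>2 - x - 1\<close>, followed by adding the digit \<open>d\<close>.\<close>
fun carry_step :: "state \<Rightarrow> int \<Rightarrow> state" where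
  "carry_step (a, b, c, e) d = (b - a + d, c - a, e - a, a)"

primrec carry_state :: "(nat \<Rightarrow> int) \<Rightarrow> nat \<Rightarrow> state" where
  "carry_state c 0 = (0, 0, 0, 0)"
| "carry_state c (Suc n) = carry_step (carry_state c n) (c n)"

lemma state_val_carry_step:
  fixes x :: "'a::field"
  assumes "x^4 - x^3 - x^2 - x - 1 = 0"
  shows "x * state_val (carry_step v d) x = state_val v x + of_int d * x"
proof -
  obtain a b c e where v: "v = (a, b, c, e)" by (cases v) auto
  have x4: "x^4 = x^3 + x^2 + x + 1" using assms by (simp add: algebra_simps)
  have "x * state_val (carry_step v d) x
      = of_int (b - a + d) * x + of_int (c - a) * x^2 + of_int (e - a) * x^3 + of_int a * x^4"
    by (simp add: v power2_eq_square power3_eq_cube power4_eq_xxxx algebra_simps)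
  also have "\<dots> = state_val v x + of_int d * x"
    unfolding x4 by (simp add: v algebra_simps)
  finally show ?thesis .
qed

lemma state_val_carry_state:
  fixes x :: "'a::field"
  assumes "x^4 - x^3 - x^2 - x - 1 = 0"
  shows "x^n * state_val (carry_state c n) x = x * (\<Sum>j<n. of_int (c j) * x^j)"
proof (induction n)
  case (Suc n)
  have "x^Suc n * state_val (carry_state c (Suc n)) x
      = x^n * (x * state_val (carry_step (carry_state c n) (c n)) x)"
    by (simp add: algebra_simps)
  also have "\<dots> = x^n * state_val (carry_state c n) x + of_int (c n) * x^Suc n"
    using state_val_carry_step[OF assms] by (simp add: algebra_simps)
  also have "\<dots> = x * (\<Sum>j<Suc n. of_int (c j) * x^j)"
    using Suc by (simp add: algebra_simps)
  finally show ?case .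
qed simp

lemma norm_digit_power_le:
  fixes x :: "'a::real_normed_field"
  assumes "\<bar>d\<bar> \<le> 1"
  shows "norm (of_int d * x^n) \<le> norm x^n"
proof -
  have "norm (of_int d * x^n) = \<bar>of_int d\<bar> * norm x^n" by (simp add: norm_mult norm_power)
  also have "\<dots> \<le> 1 * norm x^n" using assms by (intro mult_right_mono) auto
  finally show ?thesis by simp
qed

lemma summable_digit_series:
  fixes x :: "'a::{real_normed_field,banach}"
  assumes "norm x < 1" and "\<And>n. \<bar>c n\<bar> \<le> 1"
  shows "summable (\<lambda>n. of_int (c n) * x^n)"
proof (rule summable_comparison_test)
  show "\<exists>N. \<forall>n\<ge>N. norm (of_int (c n) * x^n) \<le> norm x^n"
    using norm_digit_power_le assms(2) by blast
  show "summable (\<lambda>n. norm x^n)" using assms(1) by (simp add: summable_geometric)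
qed

lemma carry_state_bound_contracting:
  fixes x :: "'a::{real_normed_field,banach}"
  assumes root: "x^4 - x^3 - x^2 - x - 1 = 0" and "norm x < 1" and "x \<noteq> 0"
    and zero: "(\<lambda>j. of_int (c j) * x^j) sums 0" and digits: "\<And>j. \<bar>c j\<bar> \<le> 1"
  shows "norm (state_val (carry_state c n) x) \<le> norm x / (1 - norm x)"
proof -
  define f where "f j = of_int (c j) * x^j" for j
  have tail: "(\<lambda>j. f (j + n)) sums (- (\<Sum>j<n. f j))"
    using sums_iff_shift'[THEN iffD2, OF zero[folded f_def], of n] by simp
  have geom: "(\<lambda>j. norm x^n * norm x^j) sums (norm x^n * (1 / (1 - norm x)))"
    by (intro sums_mult geometric_sums) (use assms in simp)
  have term_bound: "norm (f (j + n)) \<le> norm x^n * norm x^j" for j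
    using norm_digit_power_le[where x = x and n = "j + n", OF digits]
    by (simp add: f_def power_add mult.commute)
  have "norm (\<Sum>j<n. f j) = norm (\<Sum>j. f (j + n))"
    using sums_unique[OF tail] by (metis norm_minus_cancel)
  also have "\<dots> \<le> (\<Sum>j. norm x^n * norm x^j)"
    by (rule norm_suminf_le[OF term_bound]) (use geom sums_summable in blast)
  also have "\<dots> = norm x^n / (1 - norm x)" using sums_unique[OF geom] by simp
  finally have partial: "norm (\<Sum>j<n. f j) \<le> norm x^n / (1 - norm x)" .
  have "norm x^n * norm (state_val (carry_state c n) x) = norm x * norm (\<Sum>j<n. f j)"
    using arg_cong[OF state_val_carry_state[OF root, of n c], of norm]
    by (simp add: f_def norm_mult norm_power)
  also have "\<dots> \<le> norm x * (norm x^n / (1 - norm x))"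
    using partial by (intro mult_left_mono) auto
  also have "\<dots> = norm x^n * (norm x / (1 - norm x))" by simp
  finally show ?thesis by (rule mult_left_le_imp_le) (use \<open>x \<noteq> 0\<close> in simp)
qed

lemma carry_state_bound_expanding:
  fixes x :: real
  assumes root: "x^4 - x^3 - x^2 - x - 1 = 0" and "1 < x" and digits: "\<And>j. \<bar>c j\<bar> \<le> 1"
  shows "\<bar>state_val (carry_state c n) x\<bar> \<le> x / (x - 1)"
proof -
  have "\<bar>of_int (c j) * x^j\<bar> \<le> x^j" for j
    using norm_digit_power_le[OF digits, of j x] \<open>1 < x\<close> by simp
  hence "\<bar>\<Sum>j<n. of_int (c j) * x^j\<bar> \<le> (\<Sum>j<n. x^j)"
    by (intro order_trans[OF sum_abs sum_mono])
  also have "\<dots> = (x^n - 1) / (x - 1)" using \<open>1 < x\<close> by (simp add: sum_gp_strict field_simps)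
  also have "\<dots> \<le> x^n / (x - 1)" using \<open>1 < x\<close> by (simp add: divide_right_mono)
  finally have partial: "\<bar>\<Sum>j<n. of_int (c j) * x^j\<bar> \<le> x^n / (x - 1)" .
  have "x^n * \<bar>state_val (carry_state c n) x\<bar> = x * \<bar>\<Sum>j<n. of_int (c j) * x^j\<bar>"
    using arg_cong[OF state_val_carry_state[OF root, of n c], of abs] \<open>1 < x\<close> by (simp add: abs_mult)
  also have "\<dots> \<le> x * (x^n / (x - 1))"
    using partial \<open>1 < x\<close> by (intro mult_left_mono) auto
  also have "\<dots> = x^n * (x / (x - 1))" by simp
  finally show ?thesis by (rule mult_left_le_imp_le) (use \<open>1 < x\<close> in simp)
qed

lemma digit_series_powi_sums:
  fixes x :: "'a::{real_normed_field,banach}"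
  assumes "norm x < 1" "x \<noteq> 0" "\<And>n. \<bar>e (l + int n)\<bar> \<le> 1"
  shows "(\<lambda>n. of_int (e (l + int n)) * x powi (l + int n))
    sums (x powi l * (\<Sum>n. of_int (e (l + int n)) * x^n))"
proof -
  have "(\<lambda>n. x powi l * (of_int (e (l + int n)) * x^n)) sums (x powi l * (\<Sum>n. of_int (e (l + int n)) * x^n))"
    by (intro sums_mult summable_sums summable_digit_series) (use assms in auto)
  moreover have "x powi (l + int n) = x powi l * x^n" for n
    using \<open>x \<noteq> 0\<close> by (simp add: power_int_add)
  ultimately show ?thesis by (simp add: algebra_simps)
qed

lemma digit_difference_sums_zero:
  fixes x :: "'a::{real_normed_field,banach}" and eps eps' :: "int \<Rightarrow> int"
  assumes "norm x < 1" "x \<noteq> 0" "l < 4"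
    and "\<And>n. \<bar>eps' (l + int n)\<bar> \<le> 1" and "\<And>n. \<bar>eps (4 + int n)\<bar> \<le> 1"
    and eq: "(\<Sum>n. of_int (eps (4 + int n)) * x powi (4 + int n))
      = (\<Sum>n. of_int (eps' (l + int n)) * x powi (l + int n))"
  shows "(\<lambda>j. of_int (eps' (l + int j) - (if 4 \<le> l + int j then eps (l + int j) else 0)) * x^j) sums 0"
proof -
  define k where "k = nat (4 - l)"
  have k: "l + int k = 4" using \<open>l < 4\<close> unfolding k_def by simp
  define A where "A = (\<Sum>n. of_int (eps' (l + int n)) * x^n)"
  define B where "B = (\<Sum>n. of_int (eps (4 + int n)) * x^n)"
  define g where "g j = of_int (if 4 \<le> l + int j then eps (l + int j) else 0) * x^j" for j
  have "(\<lambda>j. x^k * (of_int (eps (4 + int j)) * x^j)) sums (x^k * B)"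
    unfolding B_def by (intro sums_mult summable_sums summable_digit_series) (use assms in auto)
  moreover have "g (j + k) = x^k * (of_int (eps (4 + int j)) * x^j)" for j
  proof -
    have jk: "l + int (j + k) = 4 + int j" using k by simp
    show ?thesis unfolding g_def jk by (simp add: power_add algebra_simps)
  qed
  ultimately have "(\<lambda>j. g (j + k)) sums (x^k * B)" by simp
  moreover have "\<forall>j<k. g j = 0" using k by (simp add: g_def)
  ultimately have g: "g sums (x^k * B)" by (simp add: sums_zero_iff_shift)
  have "x powi l * A = x powi 4 * B"
    using eq sums_unique[OF digit_series_powi_sums[where x = x and l = l and e = eps']]
      sums_unique[OF digit_series_powi_sums[where x = x and l = 4 and e = eps]] assms
    unfolding A_def B_def by simp
  also have "x powi 4 = x powi l * x^k" using \<open>x \<noteq> 0\<close> k by (metis power_int_add power_int_of_nat)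
  finally have "A = x^k * B" using \<open>x \<noteq> 0\<close> by simp
  moreover have "(\<lambda>j. of_int (eps' (l + int j)) * x^j - g j) sums (A - x^k * B)"
    unfolding A_def by (intro sums_diff summable_sums summable_digit_series g) (use assms in auto)
  ultimately show ?thesis by (simp add: g_def algebra_simps)
qed

section \<open>A finite automaton of carry states\<close>

text \<open>An integer relaxation of \<open>\<bar>state_val v beta1\<bar> \<le> 2.1\<close>, \<open>\<bar>state_val v beta2\<bar> \<le> 3.5\<close>
  and \<open>\<bar>Re (state_val v beta3)\<bar>, \<bar>Im (state_val v beta3)\<bar> \<le> 4.6\<close>, obtained from the
  four-digit approximations of the powers of the roots.\<close>
fun in_box :: "state \<Rightarrow> bool" where
  "in_box (a, b, c, e) = (let s = 2 * (\<bar>b\<bar> + \<bar>c\<bar> + \<bar>e\<bar>) in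
     \<bar>a * 10000 + b * 19276 + c * 37155 + e * 71618\<bar> \<le> 21000 + s \<and>
     \<bar>a * 10000 + b * (-7748) + c * 6003 + e * (-4651)\<bar> \<le> 35000 + s \<and>
     \<bar>a * 10000 + b * (-764) + c * (-6579) + e * 1516\<bar> \<le> 46000 + s \<and>
     \<bar>a * 0 + b * 8147 + c * (-1245) + e * (-5265)\<bar> \<le> 46000 + s)"

lemma scaled_integer_bound:
  fixes y z w C :: real and a b c e p q r N :: int
  assumes bound: "\<bar>of_int a + of_int b * y + of_int c * z + of_int e * w\<bar> \<le> C"
    and approx: "\<bar>y * 10000 - of_int p\<bar> \<le> 2" "\<bar>z * 10000 - of_int q\<bar> \<le> 2"
      "\<bar>w * 10000 - of_int r\<bar> \<le> 2"
    and "C * 10000 \<le> of_int N"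
  shows "\<bar>a * 10000 + b * p + c * q + e * r\<bar> \<le> N + 2 * (\<bar>b\<bar> + \<bar>c\<bar> + \<bar>e\<bar>)"
proof -
  have "real_of_int (a * 10000 + b * p + c * q + e * r)
      = 10000 * (of_int a + of_int b * y + of_int c * z + of_int e * w)
        - of_int b * (y * 10000 - of_int p) - of_int c * (z * 10000 - of_int q)
        - of_int e * (w * 10000 - of_int r)"
    by (simp add: algebra_simps)
  moreover have "\<bar>of_int b * (y * 10000 - of_int p)\<bar> \<le> \<bar>of_int b\<bar> * 2"
    "\<bar>of_int c * (z * 10000 - of_int q)\<bar> \<le> \<bar>of_int c\<bar> * 2"
    "\<bar>of_int e * (w * 10000 - of_int r)\<bar> \<le> \<bar>of_int e\<bar> * 2"
    using approx unfolding abs_mult by (simp_all add: mult_left_mono)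
  ultimately have "\<bar>real_of_int (a * 10000 + b * p + c * q + e * r)\<bar>
      \<le> real_of_int (N + 2 * (\<bar>b\<bar> + \<bar>c\<bar> + \<bar>e\<bar>))"
    using bound \<open>C * 10000 \<le> of_int N\<close> by (simp add: abs_le_iff; linarith)
  thus ?thesis by linarith
qed

lemma in_box_if_bounded:
  assumes "\<bar>state_val v beta1\<bar> \<le> 21/10" "\<bar>state_val v beta2\<bar> \<le> 35/10"
    and "\<bar>Re (state_val v beta3)\<bar> \<le> 46/10" "\<bar>Im (state_val v beta3)\<bar> \<le> 46/10"
  shows "in_box v"
proof -
  obtain a b c e where v: "v = (a, b, c, e)" by (cases v) auto
  have re: "Re (state_val v beta3)
      = of_int a + of_int b * Re beta3 + of_int c * Re (beta3^2) + of_int e * Re (beta3^3)"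
    by (simp add: v)
  have im: "Im (state_val v beta3)
      = of_int 0 + of_int b * Im beta3 + of_int c * Im (beta3^2) + of_int e * Im (beta3^3)"
    by (simp add: v)
  have "\<bar>a * 10000 + b * 19276 + c * 37155 + e * 71618\<bar> \<le> 21000 + 2 * (\<bar>b\<bar> + \<bar>c\<bar> + \<bar>e\<bar>)"
    by (rule scaled_integer_bound[where y = beta1 and z = "beta1^2" and w = "beta1^3" and C = "21/10"])
      (use assms(1) beta1_powers_approx in \<open>simp_all add: v\<close>)
  moreover have "\<bar>a * 10000 + b * (-7748) + c * 6003 + e * (-4651)\<bar> \<le> 35000 + 2 * (\<bar>b\<bar> + \<bar>c\<bar> + \<bar>e\<bar>)"
    by (rule scaled_integer_bound[where y = beta2 and z = "beta2^2" and w = "beta2^3" and C = "35/10"])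
      (use assms(2) beta2_powers_approx in \<open>simp_all add: v\<close>)
  moreover have "\<bar>a * 10000 + b * (-764) + c * (-6579) + e * 1516\<bar> \<le> 46000 + 2 * (\<bar>b\<bar> + \<bar>c\<bar> + \<bar>e\<bar>)"
    by (rule scaled_integer_bound[where y = "Re beta3" and z = "Re (beta3^2)" and w = "Re (beta3^3)"
          and C = "46/10"])
      (use assms(3) beta3_powers_approx in \<open>simp_all add: re\<close>)
  moreover have "\<bar>0 * 10000 + b * 8147 + c * (-1245) + e * (-5265)\<bar> \<le> 46000 + 2 * (\<bar>b\<bar> + \<bar>c\<bar> + \<bar>e\<bar>)"
    by (rule scaled_integer_bound[where a = 0 and y = "Im beta3" and z = "Im (beta3^2)"
          and w = "Im (beta3^3)" and C = "46/10"])
      (use assms(4) beta3_powers_approx in \<open>simp_all add: im\<close>)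
  ultimately show ?thesis by (simp add: v Let_def)
qed

lemma carry_state_in_box:
  assumes zero2: "(\<lambda>j. of_int (c j) * beta2^j) sums 0" and zero3: "(\<lambda>j. of_int (c j) * beta3^j) sums 0"
    and digits: "\<And>j. \<bar>c j\<bar> \<le> 1"
  shows "in_box (carry_state c n)"
proof (rule in_box_if_bounded)
  have "\<bar>state_val (carry_state c n) beta1\<bar> \<le> beta1 / (beta1 - 1)"
    by (rule carry_state_bound_expanding[OF beta1_root _ digits]) (use beta1_bounds in simp)
  also have "\<dots> \<le> 21/10" using beta1_bounds by (simp add: field_simps)
  finally show "\<bar>state_val (carry_state c n) beta1\<bar> \<le> 21/10" .
  have "norm (state_val (carry_state c n) beta2) \<le> norm beta2 / (1 - norm beta2)"
    by (rule carry_state_bound_contracting[OF beta2_root _ _ zero2 digits]) (use beta2_bounds in auto)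
  also have "\<dots> \<le> 35/10" using beta2_bounds by (simp add: field_simps)
  finally show "\<bar>state_val (carry_state c n) beta2\<bar> \<le> 35/10" by simp
  have "norm (state_val (carry_state c n) beta3) \<le> norm beta3 / (1 - norm beta3)"
    by (rule carry_state_bound_contracting[OF beta3_root _ beta3_nonzero zero3 digits])
      (use norm_beta3_le in simp)
  also have "\<dots> \<le> 46/10" using norm_beta3_le by (simp add: field_simps)
  finally show "\<bar>Re (state_val (carry_state c n) beta3)\<bar> \<le> 46/10"
    "\<bar>Im (state_val (carry_state c n) beta3)\<bar> \<le> 46/10"
    using abs_Re_le_cmod abs_Im_le_cmod by (blast intro: order_trans)+
qed

fun state_key :: "state \<Rightarrow> int" where
  "state_key (a, b, c, e) = ((a * 16 + b) * 16 + c) * 16 + e"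

datatype state_tree = Leaf | Node state_tree int state nat state_tree

fun lookup_height :: "state \<Rightarrow> state_tree \<Rightarrow> nat option" where
  "lookup_height v Leaf = None"
| "lookup_height v (Node l k w h r) =
    (if state_key v < k then lookup_height v l
     else if k < state_key v then lookup_height v r
     else if v = w then Some h else None)"

fun tree_entries :: "state_tree \<Rightarrow> (state \<times> nat) list" where
  "tree_entries Leaf = []"
| "tree_entries (Node l k w h r) = tree_entries l @ [(w, h)] @ tree_entries r"

lemma lookup_height_in_entries: "lookup_height v t = Some h \<Longrightarrow> (v, h) \<in> set (tree_entries t)"
  by (induction t) (auto split: if_splits)

text \<open>Along any digit step that stays in the
  box, positive heights strictly decrease and height 0 can only be followed by listed states; hence an
  infinite path in the box starting at height 0 never leaves height 0.\<close>
definition height_table :: state_tree where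
  "height_table = (Node (Node (Node (Node (Node (Node (Node (Node Leaf (-21502) (-5,-4,0,2) 1 
    Leaf) (-17422) (-4,-4,-1,2) 1 (Node Leaf (-17391) (-4,-4,1,1) 1 Leaf)) (-17166) (-4,-3,-1,2) 1 
    (Node (Node Leaf (-17135) (-4,-3,1,1) 1 Leaf) (-16895) (-4,-2,0,1) 1 Leaf)) (-13520) (-3,-5,3,0) 
    1 (Node (Node (Node Leaf (-13357) (-3,-4,-3,3) 1 Leaf) (-13326) (-3,-4,-1,2) 3 Leaf) (-13295) 
    (-3,-4,1,1) 2 (Node (Node Leaf (-13086) (-3,-3,-2,2) 1 Leaf) (-13070) (-3,-3,-1,2) 3 Leaf))) 
    (-13055) (-3,-3,0,1) 3 (Node (Node (Node (Node Leaf (-13024) (-3,-3,2,0) 1 Leaf) (-12799) 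
    (-3,-2,0,1) 3 (Node Leaf (-12768) (-3,-2,2,0) 1 Leaf)) (-12559) (-3,-1,-1,1) 3 (Node (Node Leaf 
    (-12528) (-3,-1,1,0) 2 Leaf) (-12272) (-3,0,1,0) 2 Leaf)) (-12001) (-3,1,2,-1) 1 (Node (Node 
    (Node Leaf (-9261) (-2,-4,-3,3) 1 Leaf) (-9230) (-2,-4,-1,2) 2 Leaf) (-9199) (-2,-4,1,1) 4 (Node 
    (Node Leaf (-9168) (-2,-4,3,0) 1 Leaf) (-9021) (-2,-3,-4,3) 1 Leaf)))) (-8990) (-2,-3,-2,2) 5 
    (Node (Node (Node (Node (Node Leaf (-8959) (-2,-3,0,1) 7 Leaf) (-8928) (-2,-3,2,0) 3 (Node Leaf 
    (-8897) (-2,-3,4,-1) 1 Leaf)) (-8734) (-2,-2,-2,2) 5 (Node (Node Leaf (-8703) (-2,-2,0,1) 7 Leaf) 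
    (-8672) (-2,-2,2,0) 3 Leaf)) (-8657) (-2,-2,3,-1) 1 (Node (Node (Node Leaf (-8463) (-2,-1,-1,1) 7 
    Leaf) (-8432) (-2,-1,1,0) 8 Leaf) (-8401) (-2,-1,3,-1) 1 (Node (Node Leaf (-8207) (-2,0,-1,1) 6 
    Leaf) (-8192) (-2,0,0,0) 10 Leaf))) (-8176) (-2,0,1,0) 8 (Node (Node (Node (Node Leaf (-8161) 
    (-2,0,2,-1) 4 Leaf) (-8145) (-2,0,3,-1) 1 (Node Leaf (-7936) (-2,1,0,0) 6 Leaf)) (-7905) 
    (-2,1,2,-1) 4 (Node (Node Leaf (-7665) (-2,2,1,-1) 4 Leaf) (-7634) (-2,2,3,-2) 1 Leaf)) (-7409) 
    (-2,3,1,-1) 2 (Node (Node (Node Leaf (-7378) (-2,3,3,-2) 1 Leaf) (-7138) (-2,4,2,-2) 2 Leaf) 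
    (-5165) (-1,-4,-3,3) 1 (Node (Node Leaf (-5150) (-1,-4,-2,2) 2 Leaf) (-5134) (-1,-4,-1,2) 2 
    Leaf))))) (-5119) (-1,-4,0,1) 5 (Node (Node (Node (Node (Node (Node Leaf (-5088) (-1,-4,2,0) 3 
    Leaf) (-4925) (-1,-3,-4,3) 2 (Node Leaf (-4894) (-1,-3,-2,2) 7 Leaf)) (-4863) (-1,-3,0,1) 0 (Node 
    (Node Leaf (-4832) (-1,-3,2,0) 5 Leaf) (-4669) (-1,-2,-4,3) 2 Leaf)) (-4654) (-1,-2,-3,2) 5 (Node 
    (Node (Node Leaf (-4638) (-1,-2,-2,2) 9 Leaf) (-4623) (-1,-2,-1,1) 0 Leaf) (-4592) (-1,-2,1,0) 0 
    (Node (Node Leaf (-4561) (-1,-2,3,-1) 4 Leaf) (-4398) (-1,-1,-3,2) 5 Leaf))) (-4367) (-1,-1,-1,1) 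
    0 (Node (Node (Node (Node Leaf (-4336) (-1,-1,1,0) 0 Leaf) (-4305) (-1,-1,3,-1) 6 (Node Leaf 
    (-4127) (-1,0,-2,1) 0 Leaf)) (-4096) (-1,0,0,0) 0 (Node (Node Leaf (-4065) (-1,0,2,-1) 0 Leaf) 
    (-4034) (-1,0,4,-2) 1 Leaf)) (-3871) (-1,1,-2,1) 0 (Node (Node (Node Leaf (-3840) (-1,1,0,0) 0 
    Leaf) (-3809) (-1,1,2,-1) 0 Leaf) (-3778) (-1,1,4,-2) 1 (Node (Node Leaf (-3600) (-1,2,-1,0) 7 
    Leaf) (-3569) (-1,2,1,-1) 8 Leaf)))) (-3538) (-1,2,3,-2) 5 (Node (Node (Node (Node (Node Leaf 
    (-3313) (-1,3,1,-1) 4 Leaf) (-3282) (-1,3,3,-2) 3 (Node Leaf (-3267) (-1,3,4,-3) 1 Leaf)) (-3042) 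
    (-1,4,2,-2) 2 (Node (Node Leaf (-3011) (-1,4,4,-3) 1 Leaf) (-1085) (0,-4,-4,3) 1 Leaf)) (-1054) 
    (0,-4,-2,2) 2 (Node (Node (Node Leaf (-1023) (0,-4,0,1) 3 Leaf) (-829) (0,-3,-4,3) 2 Leaf) (-798) 
    (0,-3,-2,2) 4 (Node (Node Leaf (-767) (0,-3,0,1) 9 Leaf) (-752) (0,-3,1,0) 7 Leaf))) (-589) 
    (0,-2,-5,3) 2 (Node (Node (Node (Node Leaf (-558) (0,-2,-3,2) 6 Leaf) (-527) (0,-2,-1,1) 0 Leaf) 
    (-496) (0,-2,1,0) 0 (Node (Node Leaf (-302) (0,-1,-3,2) 6 Leaf) (-271) (0,-1,-1,1) 0 Leaf)) 
    (-256) (0,-1,0,0) 0 (Node (Node (Node Leaf (-240) (0,-1,1,0) 0 Leaf) (-225) (0,-1,2,-1) 0 Leaf) 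
    (-209) (0,-1,3,-1) 8 (Node (Node Leaf (-62) (0,0,-4,2) 4 Leaf) (-31) (0,0,-2,1) 0 Leaf)))))) (0) 
    (0,0,0,0) 0 (Node (Node (Node (Node (Node (Node (Node Leaf (31) (0,0,2,-1) 0 Leaf) (62) 
    (0,0,4,-2) 4 (Node Leaf (209) (0,1,-3,1) 8 Leaf)) (225) (0,1,-2,1) 0 (Node (Node Leaf (240) 
    (0,1,-1,0) 0 Leaf) (256) (0,1,0,0) 0 Leaf)) (271) (0,1,1,-1) 0 (Node (Node (Node Leaf (302) 
    (0,1,3,-2) 6 Leaf) (496) (0,2,-1,0) 0 Leaf) (527) (0,2,1,-1) 0 (Node (Node Leaf (558) (0,2,3,-2) 
    6 Leaf) (589) (0,2,5,-3) 2 Leaf))) (752) (0,3,-1,0) 7 (Node (Node (Node (Node Leaf (767) 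
    (0,3,0,-1) 9 Leaf) (798) (0,3,2,-2) 4 (Node Leaf (829) (0,3,4,-3) 2 Leaf)) (1023) (0,4,0,-1) 3 
    (Node (Node Leaf (1054) (0,4,2,-2) 2 Leaf) (1085) (0,4,4,-3) 1 Leaf)) (3011) (1,-4,-4,3) 1 (Node 
    (Node (Node Leaf (3042) (1,-4,-2,2) 2 Leaf) (3267) (1,-3,-4,3) 1 Leaf) (3282) (1,-3,-3,2) 3 (Node 
    (Node Leaf (3313) (1,-3,-1,1) 4 Leaf) (3538) (1,-2,-3,2) 5 Leaf)))) (3569) (1,-2,-1,1) 8 (Node 
    (Node (Node (Node (Node Leaf (3600) (1,-2,1,0) 7 Leaf) (3778) (1,-1,-4,2) 1 (Node Leaf (3809) 
    (1,-1,-2,1) 0 Leaf)) (3840) (1,-1,0,0) 0 (Node (Node Leaf (3871) (1,-1,2,-1) 0 Leaf) (4034) 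
    (1,0,-4,2) 1 Leaf)) (4065) (1,0,-2,1) 0 (Node (Node (Node Leaf (4096) (1,0,0,0) 0 Leaf) (4127) 
    (1,0,2,-1) 0 Leaf) (4305) (1,1,-3,1) 6 (Node (Node Leaf (4336) (1,1,-1,0) 0 Leaf) (4367) 
    (1,1,1,-1) 0 Leaf))) (4398) (1,1,3,-2) 5 (Node (Node (Node (Node Leaf (4561) (1,2,-3,1) 4 Leaf) 
    (4592) (1,2,-1,0) 0 (Node Leaf (4623) (1,2,1,-1) 0 Leaf)) (4638) (1,2,2,-2) 9 (Node (Node Leaf 
    (4654) (1,2,3,-2) 5 Leaf) (4669) (1,2,4,-3) 2 Leaf)) (4832) (1,3,-2,0) 5 (Node (Node (Node Leaf 
    (4863) (1,3,0,-1) 0 Leaf) (4894) (1,3,2,-2) 7 Leaf) (4925) (1,3,4,-3) 2 (Node (Node Leaf (5088) 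
    (1,4,-2,0) 3 Leaf) (5119) (1,4,0,-1) 5 Leaf))))) (5134) (1,4,1,-2) 2 (Node (Node (Node (Node 
    (Node (Node Leaf (5150) (1,4,2,-2) 2 Leaf) (5165) (1,4,3,-3) 1 (Node Leaf (7138) (2,-4,-2,2) 2 
    Leaf)) (7378) (2,-3,-3,2) 1 (Node (Node Leaf (7409) (2,-3,-1,1) 2 Leaf) (7634) (2,-2,-3,2) 1 
    Leaf)) (7665) (2,-2,-1,1) 4 (Node (Node (Node Leaf (7905) (2,-1,-2,1) 4 Leaf) (7936) (2,-1,0,0) 6 
    Leaf) (8145) (2,0,-3,1) 1 (Node (Node Leaf (8161) (2,0,-2,1) 4 Leaf) (8176) (2,0,-1,0) 8 Leaf))) 
    (8192) (2,0,0,0) 10 (Node (Node (Node (Node Leaf (8207) (2,0,1,-1) 6 Leaf) (8401) (2,1,-3,1) 1 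
    (Node Leaf (8432) (2,1,-1,0) 8 Leaf)) (8463) (2,1,1,-1) 7 (Node (Node Leaf (8657) (2,2,-3,1) 1 
    Leaf) (8672) (2,2,-2,0) 3 Leaf)) (8703) (2,2,0,-1) 7 (Node (Node (Node Leaf (8734) (2,2,2,-2) 5 
    Leaf) (8897) (2,3,-4,1) 1 Leaf) (8928) (2,3,-2,0) 3 (Node (Node Leaf (8959) (2,3,0,-1) 7 Leaf) 
    (8990) (2,3,2,-2) 5 Leaf)))) (9021) (2,3,4,-3) 1 (Node (Node (Node (Node (Node Leaf (9168) 
    (2,4,-3,0) 1 Leaf) (9199) (2,4,-1,-1) 4 (Node Leaf (9230) (2,4,1,-2) 2 Leaf)) (9261) (2,4,3,-3) 1 
    (Node (Node Leaf (12001) (3,-1,-2,1) 1 Leaf) (12272) (3,0,-1,0) 2 Leaf)) (12528) (3,1,-1,0) 2 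
    (Node (Node (Node Leaf (12559) (3,1,1,-1) 3 Leaf) (12768) (3,2,-2,0) 1 Leaf) (12799) (3,2,0,-1) 3 
    (Node (Node Leaf (13024) (3,3,-2,0) 1 Leaf) (13055) (3,3,0,-1) 3 Leaf))) (13070) (3,3,1,-2) 3 
    (Node (Node (Node (Node Leaf (13086) (3,3,2,-2) 1 Leaf) (13295) (3,4,-1,-1) 2 Leaf) (13326) 
    (3,4,1,-2) 3 (Node (Node Leaf (13357) (3,4,3,-3) 1 Leaf) (13520) (3,5,-3,0) 1 Leaf)) (16895) 
    (4,2,0,-1) 1 (Node (Node (Node Leaf (17135) (4,3,-1,-1) 1 Leaf) (17166) (4,3,1,-2) 1 Leaf) 
    (17391) (4,4,-1,-1) 1 (Node (Node Leaf (17422) (4,4,1,-2) 1 Leaf) (21502) (5,4,0,-2) 1 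
    Leaf)))))))"

definition heights_descend :: bool where
  "heights_descend = list_all (\<lambda>(v, h). list_all (\<lambda>d. \<not> in_box (carry_step v d) \<or>
     (case lookup_height (carry_step v d) height_table of
        None \<Rightarrow> False
      | Some h' \<Rightarrow> h = 0 \<or> 0 < h' \<and> h' < h)) [-1, 0, 1]) (tree_entries height_table)"

lemma heights_descend: heights_descend
  by code_simp

lemma lookup_height_origin: "lookup_height (0, 0, 0, 0) height_table = Some 0"
  by code_simp

lemma height_table_step:
  assumes "lookup_height v height_table = Some h" "d \<in> {-1, 0, 1}" "in_box (carry_step v d)"
  shows "\<exists>h'. lookup_height (carry_step v d) height_table = Some h' \<and> (h = 0 \<or> 0 < h' \<and> h' < h)"
  using heights_descend lookup_height_in_entries[OF assms(1)] assms(2,3)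
  unfolding heights_descend_def list_all_iff by (fastforce split: option.splits)

lemma carry_state_height_zero:
  assumes box: "\<And>n. in_box (carry_state c n)" and digits: "\<And>n. c n \<in> {-1, 0, 1}"
  shows "lookup_height (carry_state c n) height_table = Some 0"
proof -
  have next_height: "\<exists>h'. lookup_height (carry_state c (Suc n)) height_table = Some h'
      \<and> (h = 0 \<or> 0 < h' \<and> h' < h)"
    if "lookup_height (carry_state c n) height_table = Some h" for n h
    using height_table_step[OF that digits] box[of "Suc n"] by simp
  have listed: "\<exists>h. lookup_height (carry_state c n) height_table = Some h" for n
    by (induction n) (use lookup_height_origin next_height in auto)
  have "h = 0" if "lookup_height (carry_state c n) height_table = Some h" for n h
    using that
  proof (induction h arbitrary: n rule: less_induct)
    case (less h)
    then obtain h' where "lookup_height (carry_state c (Suc n)) height_table = Some h'"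
      "h = 0 \<or> 0 < h' \<and> h' < h"
      using next_height by blast
    with less.IH show "h = 0" by blast
  qed
  with listed[of n] show ?thesis by blast
qed

section \<open>Admissible prefixes\<close>

fun height_zero_path :: "state \<Rightarrow> int list \<Rightarrow> bool" where
  "height_zero_path v [] = True"
| "height_zero_path v (d # ds) =
    (lookup_height (carry_step v d) height_table = Some 0 \<and> height_zero_path (carry_step v d) ds)"

fun no_four_ones :: "int list \<Rightarrow> bool" where
  "no_four_ones (a # b # c # d # ds) = (\<not> (a = 1 \<and> b = 1 \<and> c = 1 \<and> d = 1) \<and> no_four_ones (b # c # d # ds))"
| "no_four_ones _ = True"

definition admissible_words :: "nat \<Rightarrow> int list list" where
  "admissible_words k = filter (\<lambda>ds. height_zero_path (0, 0, 0, 0) ds \<and> no_four_ones ds)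
     (map ((#) 1) (List.n_lists k [0, 1]))"

lemma admissible_words_4: "admissible_words 4 = [[1, 1, 0, 1, 0]]"
  by code_simp

lemma admissible_words_5: "admissible_words 5 = [[1, 1, 0, 1, 0, 0]]"
  by code_simp

lemma admissible_words_6: "admissible_words 6 = [[1, 1, 0, 1, 0, 0, 1]]"
  by code_simp

lemma admissible_words_7: "admissible_words 7 = []"
  by code_simp

lemma height_zero_path_carry_state:
  assumes "\<And>n. lookup_height (carry_state c n) height_table = Some 0"
  shows "height_zero_path (carry_state c k) (map (\<lambda>j. c (k + j)) [0..<m])"
proof (induction m arbitrary: k)
  case (Suc m)
  have "map (\<lambda>j. c (k + j)) [0..<Suc m] = c k # map (\<lambda>j. c (Suc k + j)) [0..<m]"
    by (simp add: map_upt_Suc del: upt_Suc)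
  thus ?case using Suc[of "Suc k"] assms[of "Suc k"] by simp
qed simp

lemma no_four_ones_intro:
  "(\<And>i. i + 3 < length ds \<Longrightarrow> \<not> (ds ! i = 1 \<and> ds ! (i + 1) = 1 \<and> ds ! (i + 2) = 1 \<and> ds ! (i + 3) = 1))
    \<Longrightarrow> no_four_ones ds"
proof (induction ds rule: no_four_ones.induct)
  case (1 a b c d ds)
  have "no_four_ones (b # c # d # ds)"
    by (rule 1(1)) (use 1(2)[of "Suc _"] in simp)
  moreover have "\<not> (a = 1 \<and> b = 1 \<and> c = 1 \<and> d = 1)" using 1(2)[of 0] by simp
  ultimately show ?case by simp
qed auto

lemma admissible_prefix:
  assumes eps: "Dinf 4 eps" and eps': "Dinf l eps'"
    and eq: "series_val 4 eps = series_val l eps'" and "l < 4" "eps' l = 1"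
    and "l + int k \<le> 3"
  shows "map (\<lambda>j. eps' (l + int j)) [0..<Suc k] \<in> set (admissible_words k)"
proof -
  have eps_digits: "\<And>i. 4 \<le> i \<Longrightarrow> eps i \<in> {0, 1}" using eps unfolding Dinf_def by blast
  have eps'_digits: "\<And>i. l \<le> i \<Longrightarrow> eps' i \<in> {0, 1}"
    and no_four: "\<And>i. l \<le> i \<Longrightarrow> \<not> (eps' i = 1 \<and> eps' (i + 1) = 1 \<and> eps' (i + 2) = 1 \<and> eps' (i + 3) = 1)"
    using eps' unfolding Dinf_def by blast+
  have abs_eps: "\<bar>eps (4 + int n)\<bar> \<le> 1" and abs_eps': "\<bar>eps' (l + int n)\<bar> \<le> 1" for n
    using eps_digits[of "4 + int n"] eps'_digits[of "l + int n"] by auto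
  define c where "c j = eps' (l + int j) - (if 4 \<le> l + int j then eps (l + int j) else 0)" for j
  have c_digits: "c j \<in> {-1, 0, 1}" for j
    using eps_digits[of "l + int j"] eps'_digits[of "l + int j"] unfolding c_def by auto
  have abs_c: "\<bar>c j\<bar> \<le> 1" for j using c_digits[of j] by auto
  have zero2: "(\<lambda>j. of_int (c j) * beta2^j) sums 0"
    unfolding c_def using beta2_bounds eq \<open>l < 4\<close>
    by (intro digit_difference_sums_zero abs_eps abs_eps') (auto simp: series_val_def)
  have zero3: "(\<lambda>j. of_int (c j) * beta3^j) sums 0"
    unfolding c_def using norm_beta3_le beta3_nonzero eq \<open>l < 4\<close>
    by (intro digit_difference_sums_zero abs_eps abs_eps') (auto simp: series_val_def)
  have "lookup_height (carry_state c n) height_table = Some 0" for n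
    by (rule carry_state_height_zero[OF carry_state_in_box[OF zero2 zero3 abs_c] c_digits])
  from height_zero_path_carry_state[OF this, of 0 "Suc k"]
  have path: "height_zero_path (0, 0, 0, 0) (map c [0..<Suc k])" by simp
  define w where "w = map (\<lambda>j. eps' (l + int j)) [0..<Suc k]"
  have "w = map c [0..<Suc k]"
    using \<open>l + int k \<le> 3\<close> by (simp add: w_def c_def del: upt_Suc)
  with path have "height_zero_path (0, 0, 0, 0) w" by simp
  moreover have "no_four_ones w"
    unfolding w_def
  proof (rule no_four_ones_intro)
    fix i assume "i + 3 < length (map (\<lambda>j. eps' (l + int j)) [0..<Suc k])"
    with no_four[of "l + int i"] show "\<not> (map (\<lambda>j. eps' (l + int j)) [0..<Suc k] ! i = 1
        \<and> map (\<lambda>j. eps' (l + int j)) [0..<Suc k] ! (i + 1) = 1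
        \<and> map (\<lambda>j. eps' (l + int j)) [0..<Suc k] ! (i + 2) = 1
        \<and> map (\<lambda>j. eps' (l + int j)) [0..<Suc k] ! (i + 3) = 1)"
      by (simp add: ac_simps del: upt_Suc)
  qed
  moreover have "w = 1 # map (\<lambda>j. eps' (l + int (Suc j))) [0..<k]"
    using \<open>eps' l = 1\<close> by (simp add: w_def map_upt_Suc del: upt_Suc)
  moreover have "map (\<lambda>j. eps' (l + int (Suc j))) [0..<k] \<in> set (List.n_lists k [0, 1])"
    using eps'_digits[of "l + int (Suc _)"] by (auto simp: set_n_lists)
  ultimately show ?thesis unfolding w_def[symmetric] admissible_words_def by auto
qed

lemma partial_val_eq_aset:
  assumes "\<And>i. l \<le> i \<Longrightarrow> eps' i \<in> {0, 1}"
  shows "partial_val l 3 eps' = aset {i \<in> {l..3}. eps' i = 1}"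
proof -
  have sum_eq: "(\<Sum>i\<in>{i \<in> {l..3}. eps' i = 1}. x powi i) = (\<Sum>i = l..3. of_int (eps' i) * x powi i)"
    for x :: "'a::field"
  proof -
    have "(\<Sum>i\<in>{i \<in> {l..3}. eps' i = 1}. x powi i) = (\<Sum>i = l..3. if eps' i = 1 then x powi i else 0)"
      by (rule sum.inter_filter) simp
    also have "\<dots> = (\<Sum>i = l..3. of_int (eps' i) * x powi i)"
      using assms by (intro sum.cong) fastforce+
    finally show ?thesis .
  qed
  show ?thesis unfolding partial_val_def aset_def by (simp only: sum_eq)
qed

lemma aset_in_S_set: "A \<subseteq> {0..3} \<Longrightarrow> A \<noteq> {0..3} \<Longrightarrow> aset A \<in> S_set"
  and aset_exceptional_in_S_set:
    "aset {-1, 0, 2} \<in> S_set" "aset {-2, -1, 1} \<in> S_set" "aset {-3, -2, 0, 3} \<in> S_set"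
  unfolding S_set_def Let_def by blast+

lemma partial_val_in_S_set_nonneg:
  assumes eps': "Dinf l eps'" and "0 \<le> l"
  shows "partial_val l 3 eps' \<in> S_set"
proof -
  have digits: "\<And>i. l \<le> i \<Longrightarrow> eps' i \<in> {0, 1}" using eps' unfolding Dinf_def by blast
  have no_four: "\<not> (eps' 0 = 1 \<and> eps' 1 = 1 \<and> eps' 2 = 1 \<and> eps' 3 = 1)" if "l \<le> 0"
    using eps' that unfolding Dinf_def by auto
  define A where "A = {i \<in> {l..3}. eps' i = 1}"
  have "A \<subseteq> {0..3}" using \<open>0 \<le> l\<close> unfolding A_def by auto
  moreover have "0 \<notin> A \<or> 1 \<notin> A \<or> 2 \<notin> A \<or> 3 \<notin> A"
    using no_four unfolding A_def by auto
  hence "A \<noteq> {0..3}" by auto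
  moreover have "partial_val l 3 eps' = aset A"
    unfolding A_def by (rule partial_val_eq_aset[OF digits])
  ultimately show ?thesis by (simp add: aset_in_S_set)
qed

lemma exceptional_partial_vals:
  assumes "Dinf 4 eps" and eps': "Dinf l eps'" and "series_val 4 eps = series_val l eps'"
    and "eps' l = 1"
  shows "l = -3 \<Longrightarrow> partial_val l 3 eps' = aset {-3, -2, 0, 3}"
    and "l = -2 \<Longrightarrow> partial_val l 3 eps' = aset {-2, -1, 1}"
    and "l = -1 \<Longrightarrow> partial_val l 3 eps' = aset {-1, 0, 2}"
proof -
  note prefix = admissible_prefix[OF assms(1-3) _ assms(4)]
  have partial_val: "partial_val l 3 eps' = aset {i \<in> {l..3}. eps' i = 1}"
    by (rule partial_val_eq_aset) (use eps' in \<open>simp add: Dinf_def\<close>)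
  show "partial_val l 3 eps' = aset {-3, -2, 0, 3}" if "l = -3"
  proof -
    have "map (\<lambda>j. eps' (-3 + int j)) [0..<7] = [1, 1, 0, 1, 0, 0, 1]"
      using prefix[of 6] that by (simp add: admissible_words_6 del: upt_Suc)
    hence "{i \<in> {l..3}. eps' i = 1} = {-3, -2, 0, 3}"
      using that by (auto simp: upt_rec upto.simps simp flip: set_upto)
    thus ?thesis unfolding partial_val by simp
  qed
  show "partial_val l 3 eps' = aset {-2, -1, 1}" if "l = -2"
  proof -
    have "map (\<lambda>j. eps' (-2 + int j)) [0..<6] = [1, 1, 0, 1, 0, 0]"
      using prefix[of 5] that by (simp add: admissible_words_5 del: upt_Suc)
    hence "{i \<in> {l..3}. eps' i = 1} = {-2, -1, 1}"
      using that by (auto simp: upt_rec upto.simps simp flip: set_upto)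
    thus ?thesis unfolding partial_val by simp
  qed
  show "partial_val l 3 eps' = aset {-1, 0, 2}" if "l = -1"
  proof -
    have "map (\<lambda>j. eps' (-1 + int j)) [0..<5] = [1, 1, 0, 1, 0]"
      using prefix[of 4] that by (simp add: admissible_words_4 del: upt_Suc)
    hence "{i \<in> {l..3}. eps' i = 1} = {-1, 0, 2}"
      using that by (auto simp: upt_rec upto.simps simp flip: set_upto)
    thus ?thesis unfolding partial_val by simp
  qed
qed

theorem lemma3p5:
  fixes eps eps' :: "int \<Rightarrow> int" and l :: int
  assumes "Dinf 4 eps" and "Dinf l eps'"
    and "series_val 4 eps = series_val l eps'"
    and "l < 4" and "eps' l = 1"
  shows "partial_val l 3 eps' \<in> S_set \<and> l \<ge> -3
    \<and> (l = -3 \<longrightarrow> partial_val l 3 eps' = aset {-3,-2,0,3})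
    \<and> (l = -2 \<longrightarrow> partial_val l 3 eps' = aset {-2,-1,1})
    \<and> (l = -1 \<longrightarrow> partial_val l 3 eps' = aset {-1,0,2})"
proof -
  have "-3 \<le> l"
    using admissible_prefix[OF assms, of 7] by (cases "-3 \<le> l") (simp_all add: admissible_words_7)
  note exceptional = exceptional_partial_vals[OF assms(1-3,5)]
  have "partial_val l 3 eps' \<in> S_set"
  proof (cases "0 \<le> l")
    case True
    with assms(2) show ?thesis by (rule partial_val_in_S_set_nonneg)
  next
    case False
    with \<open>-3 \<le> l\<close> have "l = -3 \<or> l = -2 \<or> l = -1" by auto
    then show ?thesis using exceptional aset_exceptional_in_S_set by auto
  qed
  with \<open>-3 \<le> l\<close> exceptional show ?thesis by blast
qed

end
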